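(* Let $A=A^T\in\mathbb{R}^{n\times n}$, let $s$ be an integer with $1\leq s<d(A)$, and let $v_0\in\mathbb{R}^n$ with $\|v_0\|=1$ and $d(A,v_0)=s+1$. Consider the iteration $\widetilde v_{k+1}=P_s(A;v_k)v_k$, $v_{k+1}=\widetilde v_{k+1}/\|\widetilde v_{k+1}\|$, $k=0,1,2,\dots$. Then $v_0=v_2=v_4=\cdots$.
   Context: $d(A)$ is the degree of the minimal polynomial of $A$; $d(A,v)$ is the grade of $v$ w.r.t. $A$ (degree of the monic polynomial $p$ of smallest degree with $p(A)v=0$); $\mathcal{K}_k(A,v)=\mathrm{span}\{v,Av,\dots,A^{k-1}v\}$; $\mathcal{M}_s$ is the set of real monic polynomials of degree $s$; $\|\cdot\|$ is the Euclidean norm. For $v$ with $d(A,v)\geq s$, $P_s(\cdot\,;v)\in\mathcal{M}_s$ denotes the unique monic polynomial of degree $s$ such that $P_s(A;v)v\perp\mathcal{K}_s(A,v)$. (Under the hypotheses all $\widetilde v_k$ are nonzero.) *)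

theory Defs
  imports "HOL-Analysis.Analysis" "HOL-Computational_Algebra.Polynomial"
begin

definition mat_pow :: "real^'n^'n \<Rightarrow> nat \<Rightarrow> real^'n^'n" where
  "mat_pow A i = (((**) A) ^^ i) (mat 1)"

definition poly_mat :: "real poly \<Rightarrow> real^'n^'n \<Rightarrow> real^'n^'n" where
  "poly_mat p A = (\<Sum>i\<le>degree p. coeff p i *\<^sub>R mat_pow A i)"

definition monic_deg :: "nat \<Rightarrow> real poly set" where
  "monic_deg s = {p. degree p = s \<and> lead_coeff p = 1}"

definition minpoly_deg :: "real^'n^'n \<Rightarrow> nat" where
  "minpoly_deg A = (LEAST k. \<exists>p\<in>monic_deg k. poly_mat p A = 0)"

definition grade :: "real^'n^'n \<Rightarrow> real^'n \<Rightarrow> nat" where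
  "grade A v = (LEAST k. \<exists>p\<in>monic_deg k. poly_mat p A *v v = 0)"

definition krylov :: "nat \<Rightarrow> real^'n^'n \<Rightarrow> real^'n \<Rightarrow> (real^'n) set" where
  "krylov k A v = span {mat_pow A i *v v | i. i < k}"

definition P_poly :: "nat \<Rightarrow> real^'n^'n \<Rightarrow> real^'n \<Rightarrow> real poly" where
  "P_poly s A v = (THE p. p \<in> monic_deg s \<and>
      (\<forall>w\<in>krylov s A v. (poly_mat p A *v v) \<bullet> w = 0))"

primrec iter_v :: "real^'n^'n \<Rightarrow> nat \<Rightarrow> real^'n \<Rightarrow> nat \<Rightarrow> real^'n" where
  "iter_v A s v0 0 = v0"
| "iter_v A s v0 (Suc k) =
     (let vk = iter_v A s v0 k; w = poly_mat (P_poly s A vk) A *v vk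
      in (1 / norm w) *\<^sub>R w)"

end

theory Submission
  imports Defs
begin

text \<open>
  Write \<open>K\<^sub>j(x)\<close> for \<open>K\<^sub>j(A,x)\<close>. The monic polynomials of degree \<open>k\<close> applied to \<open>v\<close>
  give exactly the affine space \<open>A\<^sup>k v + K\<^sub>k(v)\<close>, so \<open>P\<^sub>s(A;v)v\<close> is the component of
  \<open>A\<^sup>s v\<close> orthogonal to \<open>K\<^sub>s(v)\<close>, and \<open>d(A,v) = s + 1\<close> makes \<open>K\<^sub>s\<^sub>+\<^sub>1(v)\<close> an
  \<open>A\<close>-invariant space of dimension \<open>s + 1\<close>. One step therefore maps \<open>v\<close> to a unit
  vector \<open>x \<in> K\<^sub>s\<^sub>+\<^sub>1(v)\<close> orthogonal to \<open>K\<^sub>s(v)\<close> with \<open>\<langle>x, A\<^sup>s v\<rangle> > 0\<close>. By symmetry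
  of \<open>A\<close> this says \<open>v \<perp> K\<^sub>s(x)\<close> and \<open>\<langle>A\<^sup>s x, v\<rangle> > 0\<close>, which forces \<open>d(A,x) > s\<close>;
  hence \<open>K\<^sub>s\<^sub>+\<^sub>1(v)\<close> is the orthogonal sum of \<open>span {v}\<close> and \<open>K\<^sub>s(x)\<close>. The second step
  produces a vector of \<open>K\<^sub>s\<^sub>+\<^sub>1(v)\<close> orthogonal to \<open>K\<^sub>s(x)\<close>, i.e. a multiple of \<open>v\<close>,
  and the multiple is \<open>\<langle>A\<^sup>s x, v\<rangle> > 0\<close>; normalising returns \<open>v\<close>.
\<close>

lemma mat_pow_0 [simp]: "mat_pow A 0 = mat 1"
  by (simp add: mat_pow_def)

lemma mat_pow_Suc: "mat_pow A (Suc i) = A ** mat_pow A i"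
  by (simp add: mat_pow_def)

lemma mat_pow_Suc_vec: "mat_pow A (Suc i) *v x = A *v (mat_pow A i *v x)"
  by (simp add: mat_pow_Suc matrix_vector_mul_assoc)

lemma mat_pow_add_vec: "mat_pow A (i + j) *v x = mat_pow A i *v (mat_pow A j *v x)"
  by (induction i) (simp_all add: mat_pow_Suc_vec)

lemma symmetric_mat_pow_inner:
  assumes "transpose A = A"
  shows "(mat_pow A i *v x) \<bullet> y = x \<bullet> (mat_pow A i *v y)"
proof (induction i arbitrary: y)
  case 0
  then show ?case by simp
next
  case (Suc i)
  have "(A *v z) \<bullet> y = z \<bullet> (A *v y)" for z
    by (metis assms dot_lmul_matrix transpose_matrix_vector)
  then show ?case
    using Suc mat_pow_add_vec[of A i 1 y] by (simp add: mat_pow_Suc_vec)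
qed

lemma poly_mat_eq_sum:
  assumes "degree p \<le> N"
  shows "poly_mat p A = (\<Sum>i\<le>N. coeff p i *\<^sub>R mat_pow A i)"
  unfolding poly_mat_def
  by (rule sum.mono_neutral_left) (use assms in \<open>auto simp: coeff_eq_0\<close>)

lemma sum_matrix_vector_mult:
  "finite S \<Longrightarrow> (\<Sum>i\<in>S. M i) *v x = (\<Sum>i\<in>S. M i *v x)"
  by (induction S rule: finite_induct) (simp_all add: matrix_vector_mult_add_rdistrib)

lemma poly_mat_vec_eq_sum:
  assumes "degree p \<le> N"
  shows "poly_mat p A *v v = (\<Sum>i\<le>N. coeff p i *\<^sub>R (mat_pow A i *v v))"
  by (simp add: poly_mat_eq_sum[OF assms] sum_matrix_vector_mult scaleR_matrix_vector_assoc)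

lemma poly_mat_add: "poly_mat (p + q) A = poly_mat p A + poly_mat q A"
proof -
  define N where "N = max (degree p) (degree q)"
  have "degree (p + q) \<le> N" "degree p \<le> N" "degree q \<le> N"
    by (auto simp: N_def degree_add_le)
  then show ?thesis
    by (simp add: poly_mat_eq_sum scaleR_add_left sum.distrib)
qed

lemma poly_mat_smult: "poly_mat (smult c p) A = c *\<^sub>R poly_mat p A"
  by (simp add: poly_mat_eq_sum[of "smult c p" "degree p"] poly_mat_eq_sum[of p "degree p"]
      scaleR_sum_right)

lemma poly_mat_diff: "poly_mat (p - q) A = poly_mat p A - poly_mat q A"
  using poly_mat_add[of "p - q" q A] by simp

lemma poly_mat_monom: "poly_mat (monom c i) A = c *\<^sub>R mat_pow A i"
proof -
  have "poly_mat (monom c i) A = (\<Sum>j\<le>i. (if i = j then c *\<^sub>R mat_pow A j else 0))"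
    unfolding poly_mat_eq_sum[OF degree_monom_le] by (rule sum.cong) auto
  then show ?thesis by simp
qed

lemma monic_deg_iff_coeff:
  "p \<in> monic_deg k \<longleftrightarrow> (\<forall>i\<ge>k. coeff (p - monom 1 k) i = 0)"
proof
  assume "p \<in> monic_deg k"
  then show "\<forall>i\<ge>k. coeff (p - monom 1 k) i = 0"
    by (auto simp: monic_deg_def coeff_eq_0)
next
  assume "\<forall>i\<ge>k. coeff (p - monom 1 k) i = 0"
  then have "coeff p k = 1" "\<And>i. k < i \<Longrightarrow> coeff p i = 0"
    by force+
  then have "degree p = k"
    by (intro antisym degree_le le_degree) auto
  with \<open>coeff p k = 1\<close> show "p \<in> monic_deg k"
    by (simp add: monic_deg_def)
qed

lemma mat_pow_vec_in_krylov: "i < k \<Longrightarrow> mat_pow A i *v v \<in> krylov k A v"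
  unfolding krylov_def by (auto intro: span_base)

lemma span_krylov [simp]: "span (krylov k A v) = krylov k A v"
  by (simp add: krylov_def)

text \<open>The coefficient condition says \<open>degree q < k\<close> while admitting \<open>q = 0\<close>, also for \<open>k = 0\<close>.\<close>

lemma krylov_eq_poly_mat_vec:
  "krylov k A v = {poly_mat q A *v v | q. \<forall>i\<ge>k. coeff q i = 0}" (is "_ = ?P")
proof
  have "subspace ?P"
    unfolding subspace_def
  proof (intro conjI ballI allI)
    show "0 \<in> ?P"
      by (rule CollectI, rule exI[of _ 0]) (simp add: poly_mat_def)
    show "x + y \<in> ?P" if xy: "x \<in> ?P" "y \<in> ?P" for x y
    proof -
      obtain q r where "\<forall>i\<ge>k. coeff q i = 0" "\<forall>i\<ge>k. coeff r i = 0"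
        and "x = poly_mat q A *v v" "y = poly_mat r A *v v"
        using xy by blast
      then show ?thesis
        by (auto simp: poly_mat_add matrix_vector_mult_add_rdistrib intro!: exI[of _ "q + r"])
    qed
    show "c *\<^sub>R x \<in> ?P" if x: "x \<in> ?P" for c x
    proof -
      obtain q where "\<forall>i\<ge>k. coeff q i = 0" "x = poly_mat q A *v v"
        using x by blast
      then show ?thesis
        by (auto simp: poly_mat_smult scaleR_matrix_vector_assoc intro!: exI[of _ "smult c q"])
    qed
  qed
  moreover have "mat_pow A i *v v \<in> ?P" if "i < k" for i
    using that by (auto simp: poly_mat_monom intro!: exI[of _ "monom 1 i"])
  ultimately show "krylov k A v \<subseteq> ?P"
    unfolding krylov_def by (intro span_minimal) auto
next
  show "?P \<subseteq> krylov k A v"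
  proof clarify
    fix q :: "real poly" assume q: "\<forall>i\<ge>k. coeff q i = 0"
    then have "degree q \<le> k"
      by (intro degree_le) auto
    then have "poly_mat q A *v v = (\<Sum>i\<le>k. coeff q i *\<^sub>R (mat_pow A i *v v))"
      by (rule poly_mat_vec_eq_sum)
    also have "\<dots> \<in> krylov k A v"
    proof -
      have "coeff q i *\<^sub>R (mat_pow A i *v v) \<in> krylov k A v" for i
        using q mat_pow_vec_in_krylov[of i k A v]
        by (cases "i < k") (auto simp: krylov_def intro: span_scale span_zero)
      then show ?thesis
        using span_sum[of "{..k}" _ "krylov k A v"] by simp
    qed
    finally show "poly_mat q A *v v \<in> krylov k A v" .
  qed
qed

lemma monic_poly_mat_vec_diff_in_krylov:
  assumes "p \<in> monic_deg k"
  shows "poly_mat p A *v v - mat_pow A k *v v \<in> krylov k A v"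
proof -
  have "poly_mat (p - monom 1 k) A *v v \<in> krylov k A v"
    using assms unfolding monic_deg_iff_coeff krylov_eq_poly_mat_vec by blast
  then show ?thesis
    by (simp add: poly_mat_diff poly_mat_monom matrix_vector_mult_diff_rdistrib)
qed

lemma krylov_obtain_monic:
  assumes "y \<in> krylov k A v"
  shows "\<exists>p\<in>monic_deg k. poly_mat p A *v v = mat_pow A k *v v - y"
proof -
  obtain q where q: "\<forall>i\<ge>k. coeff q i = 0" "y = poly_mat q A *v v"
    using assms unfolding krylov_eq_poly_mat_vec by blast
  then have "monom 1 k - q \<in> monic_deg k"
    unfolding monic_deg_iff_coeff by simp
  moreover have "poly_mat (monom 1 k - q) A *v v = mat_pow A k *v v - y"
    by (simp add: q(2) poly_mat_diff poly_mat_monom matrix_vector_mult_diff_rdistrib)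
  ultimately show ?thesis ..
qed

lemma monic_annihilates_iff_in_krylov:
  "(\<exists>p\<in>monic_deg k. poly_mat p A *v v = 0) \<longleftrightarrow> mat_pow A k *v v \<in> krylov k A v"
proof
  assume "\<exists>p\<in>monic_deg k. poly_mat p A *v v = 0"
  then obtain p where "p \<in> monic_deg k" "poly_mat p A *v v = 0" ..
  then have "- (mat_pow A k *v v) \<in> krylov k A v"
    using monic_poly_mat_vec_diff_in_krylov[of p k A v] by simp
  then show "mat_pow A k *v v \<in> krylov k A v"
    using span_neg[of "- (mat_pow A k *v v)" "krylov k A v"] by simp
next
  assume "mat_pow A k *v v \<in> krylov k A v"
  from krylov_obtain_monic[OF this] show "\<exists>p\<in>monic_deg k. poly_mat p A *v v = 0"
    by simp
qed

lemma krylov_mono: "k \<le> m \<Longrightarrow> krylov k A v \<subseteq> krylov m A v"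
  unfolding krylov_def by (intro span_mono) auto

lemma krylov_Suc: "krylov (Suc k) A v = span (insert (mat_pow A k *v v) (krylov k A v))"
proof -
  have "{mat_pow A i *v v | i. i < Suc k} = insert (mat_pow A k *v v) {mat_pow A i *v v | i. i < k}"
    by (auto simp: less_Suc_eq)
  then show ?thesis
    by (simp only: krylov_def span_insert[of "mat_pow A k *v v"] span_span)
qed

lemma mat_vec_in_krylov_Suc:
  assumes "x \<in> krylov k A v"
  shows "A *v x \<in> krylov (Suc k) A v"
proof -
  have "(\<lambda>y. A *v y) ` {mat_pow A i *v v | i. i < k} \<subseteq> {mat_pow A i *v v | i. i < Suc k}"
    by (auto simp flip: mat_pow_Suc_vec)
  then have "span ((\<lambda>y. A *v y) ` {mat_pow A i *v v | i. i < k}) \<subseteq> krylov (Suc k) A v"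
    unfolding krylov_def by (rule span_mono)
  then show ?thesis
    using assms unfolding krylov_def span_linear_image[OF matrix_vector_mul_linear] by blast
qed

lemma krylov_invariant:
  assumes "mat_pow A k *v v \<in> krylov k A v" and "x \<in> krylov k A v"
  shows "mat_pow A j *v x \<in> krylov k A v"
proof (induction j)
  case 0
  then show ?case using assms(2) by simp
next
  case (Suc j)
  have "krylov (Suc k) A v = krylov k A v"
    using assms(1) by (simp add: krylov_Suc span_redundant)
  then show ?case
    using mat_vec_in_krylov_Suc[OF Suc] by (simp add: mat_pow_Suc_vec)
qed

lemma dim_krylov:
  assumes "\<forall>i<k. mat_pow A i *v v \<notin> krylov i A v"
  shows "dim (krylov k A v) = k"
  using assms
proof (induction k)
  case 0
  then show ?case by (simp add: krylov_def)
next
  case (Suc k)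
  then have "mat_pow A k *v v \<notin> span (krylov k A v)"
    by simp
  with Suc show ?case
    unfolding krylov_Suc dim_span dim_insert by simp
qed

text \<open>Without this, the \<open>LEAST\<close> defining \<open>grade\<close> would be unspecified.\<close>

lemma ex_mat_pow_vec_in_krylov: "\<exists>k. mat_pow A k *v v \<in> krylov k A (v :: real^'n)"
proof (rule ccontr)
  assume "\<nexists>k. mat_pow A k *v v \<in> krylov k A v"
  then have "dim (krylov (Suc CARD('n)) A v) = Suc CARD('n)"
    by (intro dim_krylov) blast
  then show False
    using dim_subset_UNIV_cart[of "krylov (Suc CARD('n)) A v"] by simp
qed

lemma grade_eq_Least_krylov: "grade A v = (LEAST k. mat_pow A k *v v \<in> krylov k A v)"
  unfolding grade_def monic_annihilates_iff_in_krylov ..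

lemma grade_in_krylov: "mat_pow A (grade A v) *v v \<in> krylov (grade A v) A v"
  unfolding grade_eq_Least_krylov by (rule LeastI_ex[OF ex_mat_pow_vec_in_krylov])

lemma not_in_krylov_below_grade: "k < grade A v \<Longrightarrow> mat_pow A k *v v \<notin> krylov k A v"
  unfolding grade_eq_Least_krylov by (rule not_less_Least)

lemma dim_krylov_le_grade: "k \<le> grade A v \<Longrightarrow> dim (krylov k A v) = k"
  by (intro dim_krylov) (meson less_le_trans not_in_krylov_below_grade)

lemma poly_mat_vec_eq_0_below_grade:
  assumes "degree p < grade A v" and "poly_mat p A *v v = 0"
  shows "p = 0"
proof (rule ccontr)
  assume "p \<noteq> 0"
  then have "smult (inverse (lead_coeff p)) p \<in> monic_deg (degree p)"
    by (simp add: monic_deg_def)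
  moreover have "poly_mat (smult (inverse (lead_coeff p)) p) A *v v = 0"
    using assms(2) by (simp add: poly_mat_smult scaleR_matrix_vector_assoc[symmetric])
  ultimately have "grade A v \<le> degree p"
    unfolding grade_def by (intro Least_le) blast
  with assms(1) show False by simp
qed

lemma orthogonal_krylov_iff:
  "(\<forall>w\<in>krylov s A v. z \<bullet> w = 0) \<longleftrightarrow> (\<forall>j<s. z \<bullet> (mat_pow A j *v v) = 0)"
proof
  assume "\<forall>w\<in>krylov s A v. z \<bullet> w = 0"
  then show "\<forall>j<s. z \<bullet> (mat_pow A j *v v) = 0"
    by (simp add: mat_pow_vec_in_krylov)
next
  assume z: "\<forall>j<s. z \<bullet> (mat_pow A j *v v) = 0"
  have "orthogonal z w" if "w \<in> krylov s A v" for w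
    using that unfolding krylov_def
    by (rule orthogonal_to_span) (use z in \<open>auto simp: orthogonal_def\<close>)
  then show "\<forall>w\<in>krylov s A v. z \<bullet> w = 0"
    by (simp add: orthogonal_def)
qed

lemma exists_monic_orthogonal_krylov:
  "\<exists>p\<in>monic_deg s. \<forall>w\<in>krylov s A v. (poly_mat p A *v v) \<bullet> w = 0"
proof -
  obtain y z where y: "y \<in> krylov s A v"
    and z: "\<And>w. w \<in> krylov s A v \<Longrightarrow> orthogonal z w" and yz: "mat_pow A s *v v = y + z"
    using orthogonal_subspace_decomp_exists[of "krylov s A v" "mat_pow A s *v v"] by auto
  obtain p where "p \<in> monic_deg s" "poly_mat p A *v v = mat_pow A s *v v - y"
    using krylov_obtain_monic[OF y] ..
  with z yz show ?thesis
    by (auto simp: orthogonal_def)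
qed

lemma monic_deg_diff_degree_less:
  assumes "p \<in> monic_deg s" "q \<in> monic_deg s" "p \<noteq> q"
  shows "degree (p - q) < s"
proof -
  have "degree (p - q) \<le> s"
    using assms(1,2) degree_diff_le[of p s q] by (simp add: monic_deg_def)
  moreover have "coeff (p - q) s = 0"
    using assms(1,2) by (auto simp: monic_deg_def)
  moreover have "lead_coeff (p - q) \<noteq> 0"
    using assms(3) by (metis eq_iff_diff_eq_0 leading_coeff_0_iff)
  ultimately show ?thesis
    using le_neq_implies_less by fastforce
qed

lemma monic_orthogonal_krylov_unique:
  assumes "s \<le> grade A v"
    and "p \<in> monic_deg s" "\<forall>w\<in>krylov s A v. (poly_mat p A *v v) \<bullet> w = 0"
    and "q \<in> monic_deg s" "\<forall>w\<in>krylov s A v. (poly_mat q A *v v) \<bullet> w = 0"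
  shows "p = q"
proof (rule ccontr)
  assume "p \<noteq> q"
  define d where "d = poly_mat (p - q) A *v v"
  have "d = (poly_mat p A *v v - mat_pow A s *v v) - (poly_mat q A *v v - mat_pow A s *v v)"
    by (simp add: d_def poly_mat_diff matrix_vector_mult_diff_rdistrib)
  then have "d \<in> krylov s A v"
    using monic_poly_mat_vec_diff_in_krylov[of _ s A v] assms(2,4)
    by (metis span_diff span_krylov)
  moreover have "\<forall>w\<in>krylov s A v. d \<bullet> w = 0"
    using assms(3,5) by (simp add: d_def poly_mat_diff matrix_vector_mult_diff_rdistrib inner_diff_left)
  ultimately have "poly_mat (p - q) A *v v = 0"
    unfolding d_def by (metis inner_eq_zero_iff)
  moreover have "degree (p - q) < grade A v"
    using monic_deg_diff_degree_less[OF assms(2,4) \<open>p \<noteq> q\<close>] assms(1) by simp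
  ultimately show False
    using poly_mat_vec_eq_0_below_grade \<open>p \<noteq> q\<close> by fastforce
qed

lemma P_poly_spec:
  assumes "s \<le> grade A v"
  shows "P_poly s A v \<in> monic_deg s"
    and "\<forall>w\<in>krylov s A v. (poly_mat (P_poly s A v) A *v v) \<bullet> w = 0"
proof -
  have "\<exists>!p. p \<in> monic_deg s \<and> (\<forall>w\<in>krylov s A v. (poly_mat p A *v v) \<bullet> w = 0)"
    using exists_monic_orthogonal_krylov monic_orthogonal_krylov_unique[OF assms] by blast
  then have "P_poly s A v \<in> monic_deg s \<and>
      (\<forall>w\<in>krylov s A v. (poly_mat (P_poly s A v) A *v v) \<bullet> w = 0)"
    unfolding P_poly_def by (rule theI')
  then show "P_poly s A v \<in> monic_deg s"
    and "\<forall>w\<in>krylov s A v. (poly_mat (P_poly s A v) A *v v) \<bullet> w = 0"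
    by auto
qed

definition iter_step :: "real^'n^'n \<Rightarrow> nat \<Rightarrow> real^'n \<Rightarrow> real^'n" where
  "iter_step A s v = (let w = poly_mat (P_poly s A v) A *v v in (1 / norm w) *\<^sub>R w)"

lemma iter_v_Suc: "iter_v A s v0 (Suc k) = iter_step A s (iter_v A s v0 k)"
  by (simp add: iter_step_def Let_def)

lemma iter_step_spec:
  assumes "s < grade A v"
  shows "iter_step A s v \<in> krylov (Suc s) A v"
    and "\<forall>w\<in>krylov s A v. iter_step A s v \<bullet> w = 0"
    and "iter_step A s v \<bullet> (mat_pow A s *v v) > 0"
proof -
  define u where "u = poly_mat (P_poly s A v) A *v v"
  have step: "iter_step A s v = (1 / norm u) *\<^sub>R u"
    by (simp add: iter_step_def Let_def u_def)
  have monic: "P_poly s A v \<in> monic_deg s" and u_orth: "\<forall>w\<in>krylov s A v. u \<bullet> w = 0"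
    using P_poly_spec[of s A v] assms unfolding u_def by simp_all
  have u_diff: "u - mat_pow A s *v v \<in> krylov s A v"
    unfolding u_def using monic by (rule monic_poly_mat_vec_diff_in_krylov)
  have "u \<noteq> 0"
  proof
    assume "u = 0"
    then have "mat_pow A s *v v \<in> krylov s A v"
      using monic monic_annihilates_iff_in_krylov unfolding u_def by blast
    with not_in_krylov_below_grade assms show False by blast
  qed
  have "u \<bullet> (u - mat_pow A s *v v) = 0"
    using u_orth u_diff by blast
  then have "u \<bullet> (mat_pow A s *v v) = u \<bullet> u"
    by (simp add: inner_diff_right)
  then show "iter_step A s v \<bullet> (mat_pow A s *v v) > 0"
    using \<open>u \<noteq> 0\<close> unfolding step by simp
  show "\<forall>w\<in>krylov s A v. iter_step A s v \<bullet> w = 0"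
    using u_orth unfolding step by simp
  have "u - mat_pow A s *v v \<in> krylov (Suc s) A v"
    using u_diff krylov_mono[of s "Suc s" A v] by auto
  then have "u \<in> krylov (Suc s) A v"
    using span_add[of "u - mat_pow A s *v v" "krylov (Suc s) A v" "mat_pow A s *v v"]
    by (simp add: mat_pow_vec_in_krylov)
  then show "iter_step A s v \<in> krylov (Suc s) A v"
    unfolding step using span_scale[of u "krylov (Suc s) A v"] by simp
qed

lemma symmetric_orthogonal_krylov:
  assumes "transpose A = A" and "\<forall>w\<in>krylov s A v. x \<bullet> w = 0"
  shows "\<forall>w\<in>krylov s A x. v \<bullet> w = 0"
proof -
  have "x \<bullet> (mat_pow A j *v v) = 0" if "j < s" for j
    using assms(2) that by (simp add: orthogonal_krylov_iff)
  then have "v \<bullet> (mat_pow A j *v x) = 0" if "j < s" for j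
    using symmetric_mat_pow_inner[OF assms(1), of j v x] that by (simp add: inner_commute)
  then show ?thesis
    by (simp add: orthogonal_krylov_iff)
qed

lemma less_grade_if_orthogonal_krylov:
  assumes "transpose A = A"
    and "\<forall>w\<in>krylov s A v. x \<bullet> w = 0" and "x \<bullet> (mat_pow A s *v v) \<noteq> 0"
  shows "s < grade A x"
proof (rule ccontr)
  assume "\<not> s < grade A x"
  then have k: "grade A x \<le> s" by simp
  let ?k = "grade A x"
  have "mat_pow A s *v x = mat_pow A (s - ?k) *v (mat_pow A ?k *v x)"
    using k by (simp flip: mat_pow_add_vec)
  also have "\<dots> \<in> krylov ?k A x"
    by (rule krylov_invariant[OF grade_in_krylov grade_in_krylov])
  also have "\<dots> \<subseteq> krylov s A x"
    using k by (rule krylov_mono)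
  finally have "v \<bullet> (mat_pow A s *v x) = 0"
    using symmetric_orthogonal_krylov[OF assms(1,2)] by blast
  moreover have "v \<bullet> (mat_pow A s *v x) = x \<bullet> (mat_pow A s *v v)"
    using symmetric_mat_pow_inner[OF assms(1), of s v x] by (simp add: inner_commute)
  ultimately show False
    using assms(3) by simp
qed

lemma krylov_subset_invariant:
  assumes "mat_pow A k *v v \<in> krylov k A v" and "x \<in> krylov k A v"
  shows "krylov m A x \<subseteq> krylov k A v"
  unfolding krylov_def
  by (rule span_minimal) (use krylov_invariant[OF assms] in \<open>auto simp: krylov_def\<close>)

lemma orthogonal_in_span_insert:
  fixes a x :: "'a::real_inner"
  assumes "x \<in> span (insert a S)" and "\<forall>y\<in>S. x \<bullet> y = 0" and "\<forall>y\<in>S. a \<bullet> y = 0"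
  shows "\<exists>c. x = c *\<^sub>R a"
proof -
  obtain c where c: "x - c *\<^sub>R a \<in> span S"
    using assms(1) unfolding span_breakdown_eq ..
  have "orthogonal (x - c *\<^sub>R a) y" if "y \<in> S" for y
    using assms(2,3) that by (simp add: orthogonal_def inner_diff_left)
  then have "orthogonal (x - c *\<^sub>R a) (x - c *\<^sub>R a)"
    using c orthogonal_to_span by blast
  then show ?thesis
    unfolding orthogonal_def by (metis inner_eq_zero_iff eq_iff_diff_eq_0)
qed

lemma span_insert_krylov_eq_krylov:
  assumes "grade A v = Suc s" and "x \<in> krylov (Suc s) A v"
    and "s \<le> grade A x" and "v \<notin> krylov s A x"
  shows "span (insert v (krylov s A x)) = krylov (Suc s) A v"
proof -
  have "krylov s A x \<subseteq> krylov (Suc s) A v"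
    using grade_in_krylov[of A v] assms(1,2) by (simp add: krylov_subset_invariant)
  moreover have "v \<in> krylov (Suc s) A v"
    using mat_pow_vec_in_krylov[of 0 "Suc s" A v] by simp
  moreover have "dim (krylov (Suc s) A v) = dim (insert v (krylov s A x))"
    using assms by (simp add: dim_insert dim_krylov_le_grade)
  ultimately show ?thesis
    using dim_eq_span[of "insert v (krylov s A x)" "krylov (Suc s) A v"] by simp
qed

lemma iter_step_eq_if_orthogonal_krylov:
  assumes sym: "transpose A = A" and v: "norm v = 1" and grade: "grade A v = Suc s"
    and x: "x \<in> krylov (Suc s) A v" "\<forall>w\<in>krylov s A v. x \<bullet> w = 0"
    and pos: "x \<bullet> (mat_pow A s *v v) > 0"
  shows "iter_step A s x = v"
proof -
  define w where "w = poly_mat (P_poly s A x) A *v x"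
  have v_orth: "\<forall>y\<in>krylov s A x. v \<bullet> y = 0"
    using symmetric_orthogonal_krylov[OF sym x(2)] .
  have s_less: "s < grade A x"
    using less_grade_if_orthogonal_krylov[OF sym x(2)] pos by simp
  then have w_orth: "\<forall>y\<in>krylov s A x. w \<bullet> y = 0"
    and w_diff: "w - mat_pow A s *v x \<in> krylov s A x"
    using P_poly_spec[of s A x] monic_poly_mat_vec_diff_in_krylov unfolding w_def by simp_all
  have "v \<notin> krylov s A x"
    using v_orth v by auto
  then have V: "span (insert v (krylov s A x)) = krylov (Suc s) A v"
    using span_insert_krylov_eq_krylov[OF grade x(1)] s_less by simp
  have "w \<in> krylov (Suc s) A x"
    using w_diff krylov_mono[of s "Suc s" A x]
      span_add[of "w - mat_pow A s *v x" "krylov (Suc s) A x" "mat_pow A s *v x"]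
    by (auto simp: mat_pow_vec_in_krylov)
  also have "\<dots> \<subseteq> krylov (Suc s) A v"
    using grade_in_krylov[of A v] grade x(1) by (simp add: krylov_subset_invariant)
  finally obtain c where c: "w = c *\<^sub>R v"
    using orthogonal_in_span_insert[of w v "krylov s A x"] V w_orth v_orth by auto
  have "v \<bullet> (w - mat_pow A s *v x) = 0"
    using v_orth w_diff by blast
  then have "v \<bullet> w = v \<bullet> (mat_pow A s *v x)"
    by (simp add: inner_diff_right)
  also have "\<dots> = x \<bullet> (mat_pow A s *v v)"
    using symmetric_mat_pow_inner[OF sym, of s v x] by (simp add: inner_commute)
  finally have "c > 0"
    using pos v c by (simp add: dot_square_norm)
  then show ?thesis
    using c v by (simp add: iter_step_def Let_def w_def[symmetric])
qed

lemma iter_step_twice: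
  assumes "transpose A = A" and "norm v = 1" and "grade A v = Suc s"
  shows "iter_step A s (iter_step A s v) = v"
proof -
  have "s < grade A v"
    using assms(3) by simp
  from iter_step_spec[OF this] show ?thesis
    by (intro iter_step_eq_if_orthogonal_krylov[OF assms])
qed

theorem theorem4p1:
  fixes A :: "real^'n^'n" and v0 :: "real^'n" and s :: nat
  assumes "transpose A = A"
    and "1 \<le> s" and "s < minpoly_deg A"
    and "norm v0 = 1"
    and "grade A v0 = s + 1"
  shows "\<forall>k. iter_v A s v0 (2 * k) = v0"
proof
  fix k
  show "iter_v A s v0 (2 * k) = v0"
  proof (induction k)
    case 0
    then show ?case by simp
  next
    case (Suc k)
    have "iter_v A s v0 (2 * Suc k) = iter_step A s (iter_step A s (iter_v A s v0 (2 * k)))"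
      by (simp del: iter_v.simps add: iter_v_Suc)
    with Suc show ?case
      using iter_step_twice[of A v0 s] assms(1,4,5) by simp
  qed
qed

end
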